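(* Let $n\in\{2,6,10,\dots\}$ and consider $f_{n+4}$ on $\{0,1\}^{n+4}$. (a) If $x_{n+2}=x_{n+3}=x_{n+4}=0$, then changing $x_{n+1}$ from $0$ to $1$ strictly increases $f_{n+4}$ if and only if $x_i=1$ for all $i\le n$. (b) If $x_{n+4}=0$, then changing $x_{n+3}$ from $0$ to $1$ strictly increases $f_{n+4}$ if and only if $x_{n+1}=x_{n+2}=1$ and $x_i=0$ for all $i\le n$. (c) Changing $x_{n+4}$ from $0$ to $1$ strictly increases $f_{n+4}$ if and only if $x_{n+3}=1$.
   Context: For $n\in\{2,6,10,\dots\}$ define polynomials $f_n$ in variables $x_1,\dots,x_n$ (evaluated on $\{0,1\}^n$) recursively. Set $f_2(x_1,x_2):=x_1+x_2$. For $n\in\{2,6,10,\dots\}$, write $\mathbf{x}=(x_1,\dots,x_n)$, $S:=\sum_{i=1}^n x_i$, let $M_n:=\max_{\{0,1\}^n} f_n-\min_{\{0,1\}^n} f_n+1$, and define $f_{n+4}(\mathbf{x},x_{n+1},x_{n+2},x_{n+3},x_{n+4}) := f_n(\mathbf{x}) - M_n n^2 x_{n+1} + M_n(n+1) S x_{n+1} - x_{n+2} - 2M_n n S x_{n+2} + 2M_n n(n+2) x_{n+1}x_{n+2} - 4 S x_{n+3} + 2x_{n+1}x_{n+3} + 2x_{n+2}x_{n+3} - 3x_{n+3} + (M_n(n-1)+4) S x_{n+4} + 6M_n n^2 x_{n+3}x_{n+4} - 5M_n n^2 x_{n+4}$. *)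

theory Defs
  imports Main
begin

definition cube :: "nat \<Rightarrow> (nat \<Rightarrow> int) set" where
  "cube n = {x. \<forall>i. (i \<in> {1..n} \<longrightarrow> x i \<in> {0,1}) \<and> (i \<notin> {1..n} \<longrightarrow> x i = 0)}"

text \<open>F k is the polynomial f_n with n = 4k+2 (it only reads x 1, ..., x n).\<close>
primrec F :: "nat \<Rightarrow> (nat \<Rightarrow> int) \<Rightarrow> int" where
  "F 0 = (\<lambda>x. x 1 + x 2)"
| "F (Suc k) =
    (let g = F k; n = 4 * k + 2;
         M = Max (g ` cube n) - Min (g ` cube n) + 1
     in (\<lambda>x. let S = (\<Sum>i=1..n. x i) in
           g x - M * int n ^ 2 * x (n+1) + M * (int n + 1) * S * x (n+1)
           - x (n+2) - 2 * M * int n * S * x (n+2)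
           + 2 * M * int n * (int n + 2) * x (n+1) * x (n+2)
           - 4 * S * x (n+3) + 2 * x (n+1) * x (n+3) + 2 * x (n+2) * x (n+3)
           - 3 * x (n+3) + (M * (int n - 1) + 4) * S * x (n+4)
           + 6 * M * int n ^ 2 * x (n+3) * x (n+4) - 5 * M * int n ^ 2 * x (n+4)))"

definition f :: "nat \<Rightarrow> (nat \<Rightarrow> int) \<Rightarrow> int" where
  "f n = F ((n - 2) div 4)"

end

theory Submission
  imports Defs
begin

text \<open>Write n = 4k+2, S = x 1 + ... + x n and M = M_n. Since f n only
  reads x 1, ..., x n, flipping x (n+1), x (n+3) or x (n+4) changes f (n+4) by a polynomial in
  S, M, n and the last four coordinates alone. With 0 \<le> S \<le> n and M \<ge> 1 the
  sign of each difference is elementary: (n+1) S > n^2 forces S = n because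
  (n+1)(n-1) < n^2; and the x (n+4)-flip gains at least M n^2 > 0 when x (n+3) = 1, but at most
  (M (n-1) + 4) n - 5 M n^2 < 0 when x (n+3) = 0.\<close>

definition F_spread :: "nat \<Rightarrow> int" where
  "F_spread k = Max (F k ` cube (4*k+2)) - Min (F k ` cube (4*k+2)) + 1"

lemma finite_cube: "finite (cube n)"
  unfolding cube_def by (rule finite_set_of_finite_funs) auto

lemma zero_in_cube: "(\<lambda>_. 0) \<in> cube n"
  unfolding cube_def by auto

lemma F_spread_ge_1: "F_spread k \<ge> 1"
proof -
  let ?V = "F k ` cube (4*k+2)"
  have "finite ?V" and "F k (\<lambda>_. 0) \<in> ?V"
    using finite_cube zero_in_cube by auto
  then have "Min ?V \<le> Max ?V"
    using Min_le Max_ge order_trans by metis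
  then show ?thesis unfolding F_spread_def by linarith
qed

lemma F_cong:
  assumes "\<And>i. i \<in> {1..4*k+2} \<Longrightarrow> x i = y i"
  shows "F k x = F k y"
  using assms
proof (induction k arbitrary: x y)
  case 0
  then show ?case by simp
next
  case (Suc k)
  have "F k x = F k y" by (rule Suc.IH) (use Suc.prems in auto)
  moreover have "(\<Sum>i=1..4*k+2. x i) = (\<Sum>i=1..4*k+2. y i)"
    by (rule sum.cong) (use Suc.prems in auto)
  moreover have tail: "x (4*k+2+j) = y (4*k+2+j)" if "j \<in> {1..4}" for j
    using Suc.prems that by auto
  ultimately show ?case
    using tail[of 1] tail[of 2] tail[of 3] tail[of 4] by (simp add: Let_def)
qed

lemma F_fun_upd_outside:
  assumes "4*k+2 < j"
  shows "F k (x(j := v)) = F k x"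
  by (rule F_cong) (use assms in auto)

lemma sum_fun_upd_outside:
  assumes "j \<notin> A"
  shows "sum (g(j := v)) A = sum g A"
  by (rule sum.cong) (use assms in auto)

lemma F_Suc_eq:
  fixes k :: nat and x :: "nat \<Rightarrow> int"
  defines "n \<equiv> 4*k+2" and "M \<equiv> F_spread k"
  shows "F (Suc k) x =
    F k x - M * int n ^ 2 * x (n+1) + M * (int n + 1) * (\<Sum>i=1..n. x i) * x (n+1)
      - x (n+2) - 2 * M * int n * (\<Sum>i=1..n. x i) * x (n+2)
      + 2 * M * int n * (int n + 2) * x (n+1) * x (n+2)
      - 4 * (\<Sum>i=1..n. x i) * x (n+3) + 2 * x (n+1) * x (n+3) + 2 * x (n+2) * x (n+3)
      - 3 * x (n+3) + (M * (int n - 1) + 4) * (\<Sum>i=1..n. x i) * x (n+4)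
      + 6 * M * int n ^ 2 * x (n+3) * x (n+4) - 5 * M * int n ^ 2 * x (n+4)"
  unfolding n_def M_def F_spread_def F.simps Let_def ..

lemma F_Suc_flips:
  fixes k :: nat and x :: "nat \<Rightarrow> int"
  defines "n \<equiv> 4*k+2" and "M \<equiv> F_spread k" and "S \<equiv> \<Sum>i=1..4*k+2. x i"
  shows "F (Suc k) (x(n+1 := 1)) - F (Suc k) (x(n+1 := 0)) =
      M * ((int n + 1) * S - int n ^ 2) + 2 * M * int n * (int n + 2) * x (n+2) + 2 * x (n+3)"
    and "F (Suc k) (x(n+3 := 1)) - F (Suc k) (x(n+3 := 0)) =
      - 4 * S + 2 * x (n+1) + 2 * x (n+2) - 3 + 6 * M * int n ^ 2 * x (n+4)"
    and "F (Suc k) (x(n+4 := 1)) - F (Suc k) (x(n+4 := 0)) =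
      (M * (int n - 1) + 4) * S + 6 * M * int n ^ 2 * x (n+3) - 5 * M * int n ^ 2"
  unfolding F_Suc_eq
  by (simp_all add: F_fun_upd_outside sum_fun_upd_outside n_def M_def S_def algebra_simps)

lemma sum_01_bounds:
  fixes x :: "'a \<Rightarrow> int"
  assumes "\<forall>i\<in>A. x i \<in> {0,1}"
  shows "0 \<le> sum x A" and "sum x A \<le> int (card A)"
proof -
  show "0 \<le> sum x A" by (rule sum_nonneg) (use assms in auto)
  have "sum x A \<le> (\<Sum>i\<in>A. 1)" by (rule sum_mono) (use assms in auto)
  then show "sum x A \<le> int (card A)" by simp
qed

lemma sum_01_eq_0_iff:
  fixes x :: "'a \<Rightarrow> int"
  assumes "finite A" and "\<forall>i\<in>A. x i \<in> {0,1}"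
  shows "sum x A = 0 \<longleftrightarrow> (\<forall>i\<in>A. x i = 0)"
proof -
  have "\<forall>i\<in>A. 0 \<le> x i" using assms(2) by auto
  then show ?thesis by (simp add: assms(1) sum_nonneg_eq_0_iff)
qed

lemma sum_01_eq_card_iff:
  fixes x :: "'a \<Rightarrow> int"
  assumes "finite A" and "\<forall>i\<in>A. x i \<in> {0,1}"
  shows "sum x A = int (card A) \<longleftrightarrow> (\<forall>i\<in>A. x i = 1)"
proof -
  have "sum x A = int (card A) \<longleftrightarrow> (\<Sum>i\<in>A. 1 - x i) = 0"
    by (auto simp: sum_subtractf)
  also have "\<dots> \<longleftrightarrow> (\<forall>i\<in>A. 1 - x i = 0)"
    using assms by (intro sum_nonneg_eq_0_iff) auto
  finally show ?thesis by simp
qed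

lemma flip_n1_gain_pos_iff:
  fixes M N S :: int
  assumes "1 \<le> M" and "1 \<le> N" and "S \<le> N"
  shows "0 < M * ((N + 1) * S - N ^ 2) \<longleftrightarrow> S = N"
proof -
  have "0 < M * ((N + 1) * S - N ^ 2) \<longleftrightarrow> N ^ 2 < (N + 1) * S"
    using assms(1) by (simp add: zero_less_mult_iff)
  also have "\<dots> \<longleftrightarrow> S = N"
  proof
    assume "N ^ 2 < (N + 1) * S"
    show "S = N"
    proof (rule ccontr)
      assume "S \<noteq> N"
      then have "(N + 1) * S \<le> (N + 1) * (N - 1)"
        using assms by (intro mult_left_mono) auto
      then show False
        using \<open>N ^ 2 < (N + 1) * S\<close> by (simp add: algebra_simps power2_eq_square)
    qed
  qed (use assms in \<open>simp add: algebra_simps power2_eq_square\<close>)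
  finally show ?thesis .
qed

lemma flip_n3_gain_pos_iff:
  fixes a b S :: int
  assumes "a \<in> {0,1}" and "b \<in> {0,1}" and "0 \<le> S"
  shows "0 < - 4 * S + 2 * a + 2 * b - 3 \<longleftrightarrow> a = 1 \<and> b = 1 \<and> S = 0"
  using assms by auto

lemma flip_n4_gain_pos_iff:
  fixes M N S t :: int
  assumes "1 \<le> M" and "1 \<le> N" and "0 \<le> S" and "S \<le> N" and "t \<in> {0,1}"
  shows "0 < (M * (N - 1) + 4) * S + 6 * M * N ^ 2 * t - 5 * M * N ^ 2 \<longleftrightarrow> t = 1"
proof (cases "t = 1")
  case True
  have "0 \<le> (M * (N - 1) + 4) * S" using assms by simp
  moreover have "0 < M * N ^ 2" using assms by simp
  ultimately show ?thesis using True by simp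
next
  case False
  then have "t = 0" using assms(5) by simp
  have "(M * (N - 1) + 4) * S \<le> (M * (N - 1) + 4) * N"
    using assms by (intro mult_left_mono) auto
  moreover have MN: "1 * 1 \<le> M * N"
    using assms by (intro mult_mono) auto
  moreover have "N * 1 \<le> N * (M * N)"
    using assms MN by (intro mult_left_mono) auto
  ultimately show ?thesis using \<open>t = 0\<close> False
    by (simp add: algebra_simps power2_eq_square)
qed

theorem mainTheorem7:
  fixes n :: nat and x :: "nat \<Rightarrow> int"
  assumes "n mod 4 = 2"
    and "\<forall>i\<in>{1..n+4}. x i \<in> {0,1}"
  shows "(x (n+2) = 0 \<and> x (n+3) = 0 \<and> x (n+4) = 0 \<longrightarrow>
           (f (n+4) (x(n+1 := 0)) < f (n+4) (x(n+1 := 1)) \<longleftrightarrow> (\<forall>i\<in>{1..n}. x i = 1)))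
       \<and> (x (n+4) = 0 \<longrightarrow>
           (f (n+4) (x(n+3 := 0)) < f (n+4) (x(n+3 := 1)) \<longleftrightarrow>
              x (n+1) = 1 \<and> x (n+2) = 1 \<and> (\<forall>i\<in>{1..n}. x i = 0)))
       \<and> (f (n+4) (x(n+4 := 0)) < f (n+4) (x(n+4 := 1)) \<longleftrightarrow> x (n+3) = 1)"
proof -
  obtain k where n: "n = 4*k+2"
    using assms(1) by (metis mod_div_mult_eq add.commute mult.commute)
  define S where "S = (\<Sum>i=1..n. x i)"
  define M where "M = F_spread k"
  have x01: "\<forall>i\<in>{1..n}. x i \<in> {0,1}" and "x (n+1) \<in> {0,1}" "x (n+2) \<in> {0,1}" "x (n+3) \<in> {0,1}"
    using assms(2) by auto
  have S_bounds: "0 \<le> S" "S \<le> int n"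
    using sum_01_bounds[OF x01] by (simp_all add: S_def)
  have "1 \<le> M" and "1 \<le> int n"
    using F_spread_ge_1 by (simp_all add: M_def n)
  have "f (n+4) = F (Suc k)"
    by (simp add: f_def n)
  note gain = F_Suc_flips[of k x, folded n this S_def M_def]
  have flip_less_iff: "f (n+4) (x(j := 0)) < f (n+4) (x(j := 1)) \<longleftrightarrow>
      0 < f (n+4) (x(j := 1)) - f (n+4) (x(j := 0))" for j
    by simp
  show ?thesis
    unfolding flip_less_iff gain
    using flip_n1_gain_pos_iff[OF \<open>1 \<le> M\<close> \<open>1 \<le> int n\<close> S_bounds(2)]
      flip_n3_gain_pos_iff[OF \<open>x (n+1) \<in> {0,1}\<close> \<open>x (n+2) \<in> {0,1}\<close> S_bounds(1)]
      flip_n4_gain_pos_iff[OF \<open>1 \<le> M\<close> \<open>1 \<le> int n\<close> S_bounds \<open>x (n+3) \<in> {0,1}\<close>]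
      sum_01_eq_card_iff[OF _ x01] sum_01_eq_0_iff[OF _ x01]
    by (simp add: S_def)
qed

end
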